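(* Let $\bar\beta=\mathcal{N}$. If $(B,\beta_1,\ldots,\beta_B)$ is a feasible solution of problem (RO-$\Sigma$), then $T^\sigma(\beta_1,\ldots,\beta_B,\bar\beta)\neq T^*(\beta_1,\ldots,\beta_B,\bar\beta)$ for every $\sigma\in\Sigma$.
   Context: A ballot style consists of contests $\mathcal{C}=\{1,\ldots,C\}$, candidates $\mathcal{N}=\{1,\ldots,N\}$ partitioned into nonempty sets $\mathcal{N}_c$ ($c\in\mathcal{C}$), and positive integers $v_c$. A filled-out ballot is a subset $\beta\subseteq\mathcal{N}$; $\mathscr{B}=\{\beta\subseteq\mathcal{N}: |\mathcal{N}_c\cap\beta|\le v_c\ \forall c\}$. For any deck of subsets and $i\in\mathcal{N}_c$: $T^*_i(\beta_1,\ldots,\beta_B)=\sum_{b=1}^B\mathbb{I}\{i\in\beta_b\text{ and }|\mathcal{N}_c\cap\beta_b|\le v_c\}$, and for a bijection $\sigma$ of $\mathcal{N}$, $T^\sigma_i(\beta_1,\ldots,\beta_B)=\sum_{b=1}^B\mathbb{I}\{\sigma(i)\in\beta_b\text{ and }|\{\sigma(j)\in\beta_b: j\in\mathcal{N}_c\}|\le v_c\}$. $\Sigma$ is the set of non-identity bijections $\mathcal{N}\to\mathcal{N}$. Problem (RO-$\Sigma$): minimize $B$ over $B\in\mathbb{N}$ and $\beta_1,\ldots,\beta_B\in\mathscr{B}$ subject to $T^\sigma(\beta_1,\ldots,\beta_B)\neq T^*(\beta_1,\ldots,\beta_B)$ for all $\sigma\in\Sigma$. *)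

theory Defs
  imports Main
begin

text \<open>Ballot style: contests {1..C}, candidates {1..N}, partition part c = N_c, limits v c.\<close>

definition ballot_style :: "nat \<Rightarrow> nat \<Rightarrow> (nat \<Rightarrow> nat set) \<Rightarrow> (nat \<Rightarrow> nat) \<Rightarrow> bool" where
  "ballot_style C N part v \<longleftrightarrow>
     (\<forall>c\<in>{1..C}. part c \<noteq> {} \<and> v c > 0) \<and>
     (\<forall>c\<in>{1..C}. \<forall>d\<in>{1..C}. c \<noteq> d \<longrightarrow> part c \<inter> part d = {}) \<and>
     (\<Union>c\<in>{1..C}. part c) = {1..N}"

definition ballots :: "nat \<Rightarrow> nat \<Rightarrow> (nat \<Rightarrow> nat set) \<Rightarrow> (nat \<Rightarrow> nat) \<Rightarrow> nat set set" where
  "ballots C N part v = {\<beta>. \<beta> \<subseteq> {1..N} \<and> (\<forall>c\<in>{1..C}. card (part c \<inter> \<beta>) \<le> v c)}"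

definition Tstar :: "(nat \<Rightarrow> nat set) \<Rightarrow> (nat \<Rightarrow> nat) \<Rightarrow> nat set list \<Rightarrow> nat \<Rightarrow> nat \<Rightarrow> nat" where
  "Tstar part v deck c i = length (filter (\<lambda>\<beta>. i \<in> \<beta> \<and> card (part c \<inter> \<beta>) \<le> v c) deck)"

definition Tsig :: "(nat \<Rightarrow> nat set) \<Rightarrow> (nat \<Rightarrow> nat) \<Rightarrow> (nat \<Rightarrow> nat) \<Rightarrow> nat set list \<Rightarrow> nat \<Rightarrow> nat \<Rightarrow> nat" where
  "Tsig part v \<sigma> deck c i =
     length (filter (\<lambda>\<beta>. \<sigma> i \<in> \<beta> \<and> card {\<sigma> j | j. j \<in> part c \<and> \<sigma> j \<in> \<beta>} \<le> v c) deck)"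

definition T_differ :: "nat \<Rightarrow> (nat \<Rightarrow> nat set) \<Rightarrow> (nat \<Rightarrow> nat) \<Rightarrow> (nat \<Rightarrow> nat) \<Rightarrow> nat set list \<Rightarrow> bool" where
  "T_differ C part v \<sigma> deck \<longleftrightarrow>
     (\<exists>c\<in>{1..C}. \<exists>i\<in>part c. Tsig part v \<sigma> deck c i \<noteq> Tstar part v deck c i)"

definition Sigma_perms :: "nat \<Rightarrow> (nat \<Rightarrow> nat) set" where
  "Sigma_perms N = {\<sigma>. bij_betw \<sigma> {1..N} {1..N} \<and> (\<exists>i\<in>{1..N}. \<sigma> i \<noteq> i)}"

text \<open>Feasible solution of (RO-Sigma): B = length deck.\<close>
definition RO_feasible :: "nat \<Rightarrow> nat \<Rightarrow> (nat \<Rightarrow> nat set) \<Rightarrow> (nat \<Rightarrow> nat) \<Rightarrow> nat set list \<Rightarrow> bool" where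
  "RO_feasible C N part v deck \<longleftrightarrow>
     set deck \<subseteq> ballots C N part v \<and>
     (\<forall>\<sigma>\<in>Sigma_perms N. T_differ C part v \<sigma> deck)"

end

theory Submission
  imports Defs
begin

text \<open>Appending the full ballot \<open>{1..N}\<close> adds one to both tallies of a candidate \<open>i \<in> N\<^sub>c\<close>
  or to neither: a bijection \<open>\<sigma>\<close> maps \<open>N\<^sub>c\<close> injectively into \<open>{1..N}\<close>, so the overvote test
  \<open>|\<sigma>(N\<^sub>c) \<inter> {1..N}| \<le> v\<^sub>c\<close> coincides with \<open>|N\<^sub>c \<inter> {1..N}| \<le> v\<^sub>c\<close>. Hence every discrepancy
  between \<open>T\<^sup>\<sigma>\<close> and \<open>T\<^sup>*\<close> on the feasible deck survives the extension.\<close>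

lemma Tstar_append:
  "Tstar part v (deck @ deck') c i = Tstar part v deck c i + Tstar part v deck' c i"
  by (simp add: Tstar_def)

lemma Tsig_append:
  "Tsig part v \<sigma> (deck @ deck') c i = Tsig part v \<sigma> deck c i + Tsig part v \<sigma> deck' c i"
  by (simp add: Tsig_def)

lemma Tsig_eq_Tstar_single:
  assumes "inj_on \<sigma> (part c)" and "\<sigma> ` part c \<subseteq> \<beta>" and "part c \<subseteq> \<beta>" and "i \<in> part c"
  shows "Tsig part v \<sigma> [\<beta>] c i = Tstar part v [\<beta>] c i"
proof -
  have "{\<sigma> j | j. j \<in> part c \<and> \<sigma> j \<in> \<beta>} = \<sigma> ` part c"
    using assms(2) by auto
  then have "card {\<sigma> j | j. j \<in> part c \<and> \<sigma> j \<in> \<beta>} = card (part c \<inter> \<beta>)"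
    using assms(1,3) by (simp add: card_image Int_absorb2)
  then show ?thesis
    using assms(2-4) by (auto simp: Tsig_def Tstar_def)
qed

lemma T_differ_append:
  assumes "T_differ C part v \<sigma> deck"
    and "\<forall>c\<in>{1..C}. \<forall>i\<in>part c. Tsig part v \<sigma> deck' c i = Tstar part v deck' c i"
  shows "T_differ C part v \<sigma> (deck @ deck')"
  using assms by (auto simp: T_differ_def Tsig_append Tstar_append)

lemma part_subset_candidates:
  assumes "ballot_style C N part v" and "c \<in> {1..C}"
  shows "part c \<subseteq> {1..N}"
  using assms unfolding ballot_style_def by blast

theorem proposition7:
  fixes C N :: nat and part :: "nat \<Rightarrow> nat set" and v :: "nat \<Rightarrow> nat"
    and deck :: "nat set list"
  assumes "ballot_style C N part v"
    and "RO_feasible C N part v deck"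
  shows "\<forall>\<sigma>\<in>Sigma_perms N. T_differ C part v \<sigma> (deck @ [{1..N}])"
proof
  fix \<sigma> assume \<sigma>: "\<sigma> \<in> Sigma_perms N"
  then have bij: "bij_betw \<sigma> {1..N} {1..N}"
    by (simp add: Sigma_perms_def)
  have "Tsig part v \<sigma> [{1..N}] c i = Tstar part v [{1..N}] c i"
    if "c \<in> {1..C}" and "i \<in> part c" for c i
  proof (rule Tsig_eq_Tstar_single)
    show sub: "part c \<subseteq> {1..N}"
      using part_subset_candidates[OF assms(1) that(1)] .
    show "inj_on \<sigma> (part c)"
      using bij sub bij_betw_imp_inj_on inj_on_subset by blast
    show "\<sigma> ` part c \<subseteq> {1..N}"
      using bij sub bij_betw_imp_surj_on by blast
  qed (rule that(2))
  moreover have "T_differ C part v \<sigma> deck"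
    using assms(2) \<sigma> by (simp add: RO_feasible_def)
  ultimately show "T_differ C part v \<sigma> (deck @ [{1..N}])"
    by (simp add: T_differ_append)
qed

end
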